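(* Let $F(x)=x^4+ax^3+bx+c\in\mathbb{Z}[x]$ be irreducible over $\mathbb{Q}$, $\alpha$ a root of $F$ and $K=\mathbb{Q}(\alpha)$. If any of the following holds: (1) $a\equiv1\pmod8$, $b\equiv3\pmod8$ and $c\equiv7\pmod8$; (2) $a\equiv5\pmod8$ and $b\equiv c\equiv3\pmod 8$ or $b\equiv c\equiv 7\pmod8$; (3) $a\equiv c\equiv7\pmod8$ and $b\equiv5\pmod8$; then $K$ is not monogenic.
   Context: $K$ is monogenic if its ring of integers $\mathcal{O}_K$ equals $\mathbb{Z}[\theta]$ for some $\theta\in\mathcal{O}_K$. *)

theory Defs
  imports Complex_Main "HOL-Computational_Algebra.Computational_Algebra"
begin

definition simple_ext_Q :: "complex \<Rightarrow> complex set" where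
  "simple_ext_Q \<alpha> = {poly (map_poly of_rat p) \<alpha> | p :: rat poly. True}"

definition ring_of_integers :: "complex set \<Rightarrow> complex set" where
  "ring_of_integers K = {x \<in> K. algebraic_int x}"

definition int_poly_ring :: "complex \<Rightarrow> complex set" where
  "int_poly_ring \<theta> = {poly (map_poly of_int p) \<theta> | p :: int poly. True}"

definition monogenic :: "complex set \<Rightarrow> bool" where
  "monogenic K \<longleftrightarrow> (\<exists>\<theta> \<in> ring_of_integers K. ring_of_integers K = int_poly_ring \<theta>)"

end

theory Submission
  imports Defs "Jordan_Normal_Form.Char_Poly" "Berlekamp_Zassenhaus.Finite_Field"
    "Berlekamp_Zassenhaus.Factor_Bound"
begin

text \<open>Let \<open>\<O>\<close> be the ring of integers of \<open>K = \<rat>(\<alpha>)\<close>. The element \<open>\<gamma> = (\<alpha>\<^sup>3 + 4\<alpha>\<^sup>2 + 6\<alpha> + 3)/2\<close> is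
  integral, and \<open>e = \<alpha>\<^sup>2 + 3\<alpha> + 3\<close> satisfies \<open>e\<^sup>2 - e = 2\<gamma>(\<alpha> + 2)\<close>, so \<open>e\<close> is an idempotent of
  \<open>\<O>/2\<O>\<close>; norm computations show that neither \<open>e/2\<close> nor \<open>(e - 1)/2\<close> is integral, so it is a
  nontrivial one. If \<open>\<O> = \<int>[\<theta>]\<close>, then \<open>\<O>/2\<O> \<cong> GF(2)[X]/(h)\<close> with \<open>deg h \<le> 4\<close>. A root of \<open>h\<close> in
  \<open>GF(2)\<close> would send \<open>\<alpha>\<close> to 1 and \<open>\<gamma>\<close> to a root of \<open>Y\<^sup>2 + Y + 1\<close>, so \<open>h\<close> has no root; hence \<open>h\<close> is
  irreducible or \<open>(X\<^sup>2 + X + 1)\<^sup>2\<close>, and \<open>GF(2)[X]/(h)\<close> is a local ring without nontrivial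
  idempotents.\<close>

hide_const (open) UnivPoly.coeff UnivPoly.monom

section \<open>Algebraic integers from finitely generated modules\<close>

definition int_span :: "nat \<Rightarrow> (nat \<Rightarrow> complex) \<Rightarrow> complex set" where
  "int_span n g = {(\<Sum>k<n. of_int (c k) * g k) | c. True}"

definition mult_stable :: "nat \<Rightarrow> (nat \<Rightarrow> complex) \<Rightarrow> complex \<Rightarrow> bool" where
  "mult_stable n g x \<longleftrightarrow> (\<forall>k<n. x * g k \<in> int_span n g)"

lemma int_spanI: "s = (\<Sum>k<n. of_int (c k) * g k) \<Longrightarrow> s \<in> int_span n g"
  unfolding int_span_def by blast

lemma int_span_0: "0 \<in> int_span n g"
  by (rule int_spanI[where c = "\<lambda>_. 0"]) simp

lemma int_span_add:
  assumes "s \<in> int_span n g" "t \<in> int_span n g"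
  shows "s + t \<in> int_span n g"
proof -
  from assms obtain c d where "s = (\<Sum>k<n. of_int (c k) * g k)" "t = (\<Sum>k<n. of_int (d k) * g k)"
    unfolding int_span_def by auto
  then have "s + t = (\<Sum>k<n. of_int (c k + d k) * g k)"
    by (simp add: sum.distrib distrib_right)
  then show ?thesis by (rule int_spanI)
qed

lemma int_span_mult_of_int:
  assumes "s \<in> int_span n g"
  shows "of_int m * s \<in> int_span n g"
proof -
  from assms obtain c where "s = (\<Sum>k<n. of_int (c k) * g k)"
    unfolding int_span_def by auto
  then have "of_int m * s = (\<Sum>k<n. of_int (m * c k) * g k)"
    by (simp add: sum_distrib_left mult.assoc)
  then show ?thesis by (rule int_spanI)
qed

lemma int_span_uminus: "s \<in> int_span n g \<Longrightarrow> - s \<in> int_span n g"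
  using int_span_mult_of_int[of s n g "-1"] by simp

lemma int_span_generator:
  assumes "k < n"
  shows "g k \<in> int_span n g"
proof (rule int_spanI[where c = "\<lambda>l. if l = k then 1 else 0"])
  have "(\<Sum>l<n. of_int (if l = k then 1 else 0) * g l) = (\<Sum>l<n. if l = k then g l else 0)"
    by (rule sum.cong) auto
  also have "\<dots> = g k" using assms by (simp add: sum.delta)
  finally show "g k = (\<Sum>l<n. of_int (if l = k then 1 else 0) * g l)" by simp
qed

lemma int_span_sum: "(\<And>i. i \<in> I \<Longrightarrow> f i \<in> int_span n g) \<Longrightarrow> sum f I \<in> int_span n g"
  by (induction I rule: infinite_finite_induct) (auto intro: int_span_0 int_span_add)

lemma mult_stable_int_span:
  assumes "mult_stable n g x" "s \<in> int_span n g"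
  shows "x * s \<in> int_span n g"
proof -
  from assms(2) obtain c where s: "s = (\<Sum>k<n. of_int (c k) * g k)"
    unfolding int_span_def by auto
  have "x * s = (\<Sum>k<n. of_int (c k) * (x * g k))"
    by (simp add: s sum_distrib_left mult_ac)
  also have "\<dots> \<in> int_span n g"
    using assms(1) unfolding mult_stable_def by (intro int_span_sum int_span_mult_of_int) auto
  finally show ?thesis .
qed

lemma mult_stable_mult:
  assumes "mult_stable n g x" "mult_stable n g y"
  shows "mult_stable n g (x * y)"
  unfolding mult_stable_def
proof (intro allI impI)
  fix k assume "k < n"
  then have "y * g k \<in> int_span n g" using assms(2) by (auto simp: mult_stable_def)
  from mult_stable_int_span[OF assms(1) this] show "x * y * g k \<in> int_span n g"
    by (simp add: mult.assoc)
qed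

text \<open>A nonzero finitely generated module stable under \<open>x\<close> yields an integer matrix with
  eigenvalue \<open>x\<close>; its characteristic polynomial is monic.\<close>

lemma algebraic_int_if_mult_stable:
  fixes g :: "nat \<Rightarrow> complex"
  assumes "k0 < n" "g k0 \<noteq> 0" and "mult_stable n g x"
  shows "algebraic_int x"
proof -
  have "\<forall>k. \<exists>c. k < n \<longrightarrow> x * g k = (\<Sum>l<n. of_int (c l) * g l)"
    using assms(3) unfolding mult_stable_def int_span_def by blast
  then obtain cf where cf: "\<And>k. k < n \<Longrightarrow> x * g k = (\<Sum>l<n. of_int (cf k l) * g l)"
    by metis
  define A :: "int mat" where "A = mat n n (\<lambda>(k, l). cf k l)"
  have A: "A \<in> carrier_mat n n" by (simp add: A_def)
  define B :: "complex mat" where "B = of_int_hom.mat_hom A"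
  have B: "B \<in> carrier_mat n n" using A by (simp add: B_def)
  define v where "v = vec n g"
  have "B *\<^sub>v v = x \<cdot>\<^sub>v v"
  proof (rule eq_vecI)
    fix i assume "i < dim_vec (x \<cdot>\<^sub>v v)"
    then have i: "i < n" by (simp add: v_def)
    have "(B *\<^sub>v v) $ i = (\<Sum>l<n. of_int (cf i l) * g l)"
      using i by (simp add: B_def A_def v_def mult_mat_vec_def scalar_prod_def atLeast0LessThan)
    also have "\<dots> = (x \<cdot>\<^sub>v v) $ i" using cf[OF i] i by (simp add: v_def)
    finally show "(B *\<^sub>v v) $ i = (x \<cdot>\<^sub>v v) $ i" .
  qed (simp add: B_def A_def v_def)
  moreover have "v \<in> carrier_vec n" "v \<noteq> 0\<^sub>v n"
    using assms(1,2) by (auto simp: v_def vec_eq_iff)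
  ultimately have "eigenvalue B x"
    unfolding eigenvalue_def eigenvector_def using B by auto
  then have "poly (char_poly B) x = 0" using eigenvalue_root_char_poly[OF B] by simp
  also have "char_poly B = map_poly of_int (char_poly A)"
    unfolding B_def by (rule of_int_hom.char_poly_hom[OF A])
  finally show ?thesis
    using degree_monic_char_poly[OF A] by (auto simp: algebraic_int_altdef_ipoly)
qed

lemma monic_root_power:
  fixes x :: complex and P :: "int poly"
  assumes "poly (map_poly of_int P) x = 0" "lead_coeff P = 1"
  shows "x ^ degree P = - (\<Sum>m<degree P. of_int (coeff P m) * x ^ m)"
proof -
  have "0 = (\<Sum>m\<le>degree P. of_int (coeff P m) * x ^ m)"
    using assms(1) by (simp add: poly_altdef degree_map_poly coeff_map_poly)
  also have "\<dots> = (\<Sum>m<degree P. of_int (coeff P m) * x ^ m) + x ^ degree P"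
    using assms(2) by (simp add: lessThan_Suc_atMost[symmetric])
  finally show ?thesis by (simp add: eq_neg_iff_add_eq_0 add.commute)
qed

lemma degree_pos_if_monic_root:
  fixes x :: complex
  assumes "poly (map_poly of_int P) x = 0" "lead_coeff P = 1"
  shows "0 < degree P"
  using monic_root_power[OF assms] by (cases "degree P") auto

lemma power_mult_in_monomial_span:
  fixes x y :: complex and P :: "int poly"
  assumes P: "poly (map_poly of_int P) x = 0" "lead_coeff P = 1" and "j < d"
  shows "x ^ k * y ^ j \<in> int_span (degree P * d) (\<lambda>l. x ^ (l mod degree P) * y ^ (l div degree P))"
  using \<open>j < d\<close>
proof (induction k arbitrary: j rule: less_induct)
  case (less k)
  define m where "m = degree P"
  show ?case
  proof (cases "k < m")
    case True
    have "k + m * j < m * Suc j" using True by simp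
    also have "\<dots> \<le> m * d" using less.prems by (intro mult_le_mono2) simp
    finally show ?thesis
      using int_span_generator[of "k + m * j" "m * d" "\<lambda>l. x ^ (l mod m) * y ^ (l div m)"] True
      by (simp add: m_def)
  next
    case False
    then have "x ^ k * y ^ j = x ^ (k - m) * x ^ m * y ^ j"
      by (simp flip: power_add)
    also have "\<dots> = - (\<Sum>l<m. of_int (coeff P l) * (x ^ (k - m + l) * y ^ j))"
      using monic_root_power[OF P]
      by (simp add: m_def sum_distrib_left sum_distrib_right power_add mult_ac)
    also have "\<dots> \<in> int_span (m * d) (\<lambda>l. x ^ (l mod m) * y ^ (l div m))"
      using False less.prems
      by (intro int_span_uminus int_span_sum int_span_mult_of_int less.IH[unfolded m_def[symmetric]]) auto
    finally show ?thesis by (simp add: m_def)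
  qed
qed

text \<open>The module is spanned by the monomials \<open>x\<^sup>i y\<^sup>j\<close> with \<open>i < deg P\<close> and \<open>j < d\<close>.\<close>

lemma mult_stable_tower:
  fixes x y :: complex and P :: "int poly" and R :: "nat \<Rightarrow> int poly"
  assumes P: "poly (map_poly of_int P) x = 0" "lead_coeff P = 1"
    and y: "y ^ d = (\<Sum>j<d. poly (map_poly of_int (R j)) x * y ^ j)" "0 < d"
  obtains n g where "0 < n" "g 0 = 1" "mult_stable n g x" "mult_stable n g y"
proof -
  define m where "m = degree P"
  have "0 < m" unfolding m_def using P by (rule degree_pos_if_monic_root)
  define g where "g k = x ^ (k mod m) * y ^ (k div m)" for k
  have xpow: "x ^ k * y ^ j \<in> int_span (m * d) g" if "j < d" for k j
    unfolding g_def m_def by (rule power_mult_in_monomial_span[OF P that])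
  have index: "k mod m < m" "k div m < d" if "k < m * d" for k
    using that \<open>0 < m\<close> by (simp_all add: less_mult_imp_div_less mult.commute)
  have poly_xpow: "poly (map_poly of_int q) x * (x ^ i * y ^ j) \<in> int_span (m * d) g"
    if "j < d" for q i j
  proof -
    have "poly (map_poly of_int q) x * (x ^ i * y ^ j)
        = (\<Sum>l\<le>degree q. of_int (coeff q l) * (x ^ (l + i) * y ^ j))"
      by (simp add: poly_altdef sum_distrib_left sum_distrib_right power_add mult_ac)
    also have "\<dots> \<in> int_span (m * d) g"
      using that by (intro int_span_sum int_span_mult_of_int xpow)
    finally show ?thesis .
  qed
  have "mult_stable (m * d) g x"
    unfolding mult_stable_def
  proof (intro allI impI)
    fix k assume "k < m * d"
    have xg: "x * g k = x ^ Suc (k mod m) * y ^ (k div m)" by (simp add: g_def mult.assoc)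
    show "x * g k \<in> int_span (m * d) g" unfolding xg by (rule xpow[OF index(2)[OF \<open>k < m * d\<close>]])
  qed
  moreover have "mult_stable (m * d) g y"
    unfolding mult_stable_def
  proof (intro allI impI)
    fix k assume "k < m * d"
    define i j where "i = k mod m" and "j = k div m"
    have yg: "y * g k = x ^ i * y ^ Suc j" by (simp add: g_def i_def j_def mult_ac)
    show "y * g k \<in> int_span (m * d) g"
    proof (cases "Suc j < d")
      case True
      then show ?thesis unfolding yg by (rule xpow)
    next
      case False
      then have "Suc j = d" using index[OF \<open>k < m * d\<close>] by (simp add: j_def)
      then have "y * g k = (\<Sum>l<d. poly (map_poly of_int (R l)) x * (x ^ i * y ^ l))"
        using yg y(1) by (simp add: sum_distrib_left mult_ac)
      also have "\<dots> \<in> int_span (m * d) g" by (intro int_span_sum poly_xpow) auto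
      finally show ?thesis .
    qed
  qed
  moreover have "0 < m * d" "g 0 = 1" using \<open>0 < m\<close> y(2) by (simp_all add: g_def)
  ultimately show thesis by (rule that[rotated 2])
qed

lemma algebraic_int_mult:
  fixes x y :: complex
  assumes "algebraic_int x" "algebraic_int y"
  shows "algebraic_int (x * y)"
proof -
  obtain P where P: "poly (map_poly of_int P) x = 0" "lead_coeff P = 1"
    using assms(1) by (auto simp: algebraic_int_altdef_ipoly)
  obtain Q where Q: "poly (map_poly of_int Q) y = 0" "lead_coeff Q = 1"
    using assms(2) by (auto simp: algebraic_int_altdef_ipoly)
  have y: "y ^ degree Q = (\<Sum>j<degree Q. poly (map_poly of_int [:- coeff Q j:]) x * y ^ j)"
    using monic_root_power[OF Q] by (simp add: sum_negf of_int_hom.map_poly_pCons_hom)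
  obtain n g where "0 < n" "g 0 = 1" "mult_stable n g x" "mult_stable n g y"
    by (rule mult_stable_tower[OF P y degree_pos_if_monic_root[OF Q]])
  then show ?thesis by (intro algebraic_int_if_mult_stable[of 0 n g] mult_stable_mult) auto
qed

lemma algebraic_int_prod_mset:
  "(\<And>z. z \<in># A \<Longrightarrow> algebraic_int (f z :: complex)) \<Longrightarrow> algebraic_int (\<Prod>z\<in>#A. f z)"
  by (induction A) (auto intro: algebraic_int_mult)

section \<open>Conjugates and norms\<close>

interpretation of_rat_poly_hom: map_poly_comm_ring_hom "of_rat :: rat \<Rightarrow> 'a :: field_char_0" ..

lemma irreducible_dvd_if_common_root:
  fixes f g :: "rat poly" and x :: complex
  assumes irr: "irreducible f"
    and "poly (map_poly of_rat f) x = 0" "poly (map_poly of_rat g) x = 0"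
  shows "f dvd g"
proof (rule ccontr)
  assume "\<not> f dvd g"
  with irr have "gcd f g = 1"
    using prime_elem_imp_coprime[OF irreducible_imp_prime_elem[OF irr]] by simp
  then have "fst (bezout_coefficients f g) * f + snd (bezout_coefficients f g) * g = 1"
    by (simp add: bezout_coefficients_fst_snd)
  then have "poly (map_poly of_rat (fst (bezout_coefficients f g) * f
      + snd (bezout_coefficients f g) * g)) x = (1 :: complex)" by simp
  with assms(2,3) show False by (simp add: hom_distribs)
qed

text \<open>Integrality is a property of the minimal polynomial, so it transfers to conjugates.\<close>

lemma algebraic_int_at_conjugate:
  fixes f s :: "rat poly" and x z :: complex
  assumes irr: "irreducible f"
    and x: "poly (map_poly of_rat f) x = 0" and z: "poly (map_poly of_rat f) z = 0"
    and "algebraic_int (poly (map_poly of_rat s) x)"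
  shows "algebraic_int (poly (map_poly of_rat s) z)"
proof -
  obtain P where P: "poly (map_poly of_int P) (poly (map_poly of_rat s) x) = 0" "lead_coeff P = 1"
    using assms(4) by (auto simp: algebraic_int_altdef_ipoly)
  define T where "T = pcompose (map_poly of_int P) s"
  have T: "poly (map_poly of_rat T) w = poly (map_poly of_int P) (poly (map_poly of_rat s) w)"
    for w :: complex
    by (simp add: T_def of_rat_hom.map_poly_pcompose poly_pcompose map_poly_map_poly o_def)
  have "f dvd T" using irreducible_dvd_if_common_root[OF irr x] T P(1) by simp
  then have "poly (map_poly of_rat T) z = 0" using z by (auto simp: hom_distribs elim!: dvdE)
  with P(2) show ?thesis by (auto simp: T algebraic_int_altdef_ipoly)
qed

lemma not_algebraic_int_if_norm_notin_Ints:
  fixes f s :: "rat poly" and x :: complex and q :: rat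
  assumes irr: "irreducible f" and x: "poly (map_poly of_rat f) x = 0"
    and norm: "(\<Prod>z\<in>#proots (map_poly of_rat f). poly (map_poly of_rat s) z) = (of_rat q :: complex)"
    and "q \<notin> \<int>"
  shows "\<not> algebraic_int (poly (map_poly of_rat s) x)"
proof
  assume ai: "algebraic_int (poly (map_poly of_rat s) x)"
  have "f \<noteq> 0" using irr by auto
  have "algebraic_int (poly (map_poly of_rat s) z)" if "z \<in># proots (map_poly of_rat f)" for z :: complex
  proof -
    have "poly (map_poly of_rat f) z = 0" using that \<open>f \<noteq> 0\<close> by simp
    then show ?thesis by (rule algebraic_int_at_conjugate[OF irr x _ ai])
  qed
  then have "algebraic_int (\<Prod>z\<in>#proots (map_poly (of_rat :: rat \<Rightarrow> complex) f).
      poly (map_poly of_rat s) z)"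
    by (rule algebraic_int_prod_mset)
  then have "algebraic_int (of_rat q :: complex)" by (simp only: norm)
  then have "(of_rat q :: complex) \<in> \<int>" by (intro rational_algebraic_int_is_int) auto
  then obtain m where "(of_rat q :: complex) = of_int m" by (auto elim: Ints_cases)
  then have "q = of_int m" by (metis of_rat_eq_iff of_rat_of_int_eq)
  with \<open>q \<notin> \<int>\<close> show False by simp
qed

lemma prod_proots_quadratic:
  fixes p :: "complex poly"
  assumes "lead_coeff p = 1"
  shows "(\<Prod>z\<in>#proots p. (r1 - z) * (r2 - z) / 2) = poly p r1 * poly p r2 / 2 ^ degree p"
proof -
  have eval: "(\<Prod>z\<in>#proots p. t - z) = poly p t" for t
  proof -
    have "poly p t = poly (\<Prod>z\<in>#proots p. [:-z, 1:]) t"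
      using complex_poly_decompose_multiset[of p] assms by simp
    then show ?thesis by (simp add: poly_prod_mset)
  qed
  have "(\<Prod>z\<in>#A. (r1 - z) * (r2 - z) / 2)
      = (\<Prod>z\<in>#A. r1 - z) * (\<Prod>z\<in>#A. r2 - z) / 2 ^ size A" for A
    by (induction A) (simp_all add: field_simps)
  then show ?thesis by (simp add: eval size_proots_complex)
qed

lemma exists_quadratic_roots: "\<exists>r1 r2 :: complex. r1 + r2 = - p \<and> r1 * r2 = q"
proof (intro exI conjI)
  let ?s = "csqrt (p\<^sup>2 - 4 * q)"
  show "(- p + ?s) / 2 + (- p - ?s) / 2 = - p" by (simp add: field_simps)
  have "?s\<^sup>2 = p\<^sup>2 - 4 * q" by (rule power2_csqrt)
  then show "(- p + ?s) / 2 * ((- p - ?s) / 2) = q" by (simp add: field_simps power2_eq_square)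
qed

lemma odd_quarter_notin_Ints:
  assumes "odd w"
  shows "(of_int w / 4 :: rat) \<notin> \<int>"
proof
  assume "of_int w / 4 \<in> (\<int> :: rat set)"
  then obtain m where "of_int w / 4 = (of_int m :: rat)" by (auto elim: Ints_cases)
  then have "(of_int w :: rat) = of_int (4 * m)" by simp
  then have "w = 4 * m" by (simp only: of_int_eq_iff)
  with assms show False by simp
qed

text \<open>The norm of \<open>(r\<^sub>1 - x)(r\<^sub>2 - x)/2\<close> is \<open>F(r\<^sub>1) F(r\<^sub>2) / 2\<^sup>4\<close>.\<close>

lemma not_algebraic_int_half_quadratic:
  fixes F :: "int poly" and x r1 r2 :: complex and p q :: rat and w :: int
  assumes irr: "irreducible (map_poly (of_int :: int \<Rightarrow> rat) F)"
    and F: "lead_coeff F = 1" "degree F = 4" and root: "poly (map_poly of_int F) x = 0"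
    and r: "r1 + r2 = - of_rat p" "r1 * r2 = of_rat q"
    and norm: "poly (map_poly of_int F) r1 * poly (map_poly of_int F) r2 = of_int (4 * w)"
    and "odd w"
  shows "\<not> algebraic_int ((x\<^sup>2 + of_rat p * x + of_rat q) / 2)"
proof -
  define f :: "rat poly" where "f = map_poly of_int F"
  have f: "map_poly of_rat f = (map_poly of_int F :: complex poly)"
    by (simp add: f_def map_poly_map_poly o_def)
  define s where "s = [:q / 2, p / 2, 1 / 2:]"
  have s: "poly (map_poly of_rat s) z = (z\<^sup>2 + of_rat p * z + of_rat q) / 2" for z :: complex
    by (simp add: s_def of_rat_divide of_rat_hom.map_poly_pCons_hom field_simps power2_eq_square)
  have "(r1 - z) * (r2 - z) = z\<^sup>2 + of_rat p * z + of_rat q" for z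
  proof -
    have "(r1 - z) * (r2 - z) = z\<^sup>2 - (r1 + r2) * z + r1 * r2" by (simp add: algebra_simps power2_eq_square)
    then show ?thesis using r by simp
  qed
  then have "(\<Prod>z\<in>#proots (map_poly of_rat f). poly (map_poly of_rat s) z)
      = poly (map_poly of_int F) r1 * poly (map_poly of_int F) r2 / 2 ^ 4"
    unfolding f s using prod_proots_quadratic[of "map_poly of_int F" r1 r2] F by simp
  also have "\<dots> = of_rat (of_int w / 4)" unfolding norm by (simp add: of_rat_divide field_simps)
  finally have norm_s: "(\<Prod>z\<in>#proots (map_poly of_rat f). poly (map_poly of_rat s) z)
      = (of_rat (of_int w / 4) :: complex)" .
  have "irreducible f" using irr by (simp add: f_def)
  moreover have "poly (map_poly of_rat f) x = 0" using root by (simp add: f)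
  ultimately have "\<not> algebraic_int (poly (map_poly of_rat s) x)"
    using norm_s odd_quarter_notin_Ints[OF \<open>odd w\<close>] by (rule not_algebraic_int_if_norm_notin_Ints)
  then show ?thesis by (simp add: s)
qed

section \<open>Polynomials over \<open>GF(2)\<close>\<close>

type_synonym gf2 = "bool mod_ring"

abbreviation reduce2 :: "int poly \<Rightarrow> gf2 poly" where
  "reduce2 \<equiv> map_poly of_int"

lemma gf2_cases: "(x :: gf2) = 0 \<or> x = 1"
proof -
  have "Rep_mod_ring x \<in> {0..<int CARD(bool)}" using Rep_mod_ring by blast
  then have "Rep_mod_ring x = 0 \<or> Rep_mod_ring x = 1" by auto
  then show ?thesis
    by (metis Rep_mod_ring_inverse zero_mod_ring.abs_eq one_mod_ring.abs_eq)
qed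

lemma gf2_two: "(2 :: gf2) = 0"
  using of_nat_card_eq_0[where 'a = bool] by simp

lemma of_int_gf2: "(of_int k :: gf2) = (if even k then 0 else 1)"
  using gf2_two by (auto elim!: evenE oddE)

lemma reduce2_surj: "reduce2 (map_poly to_int_mod_ring k) = k"
  by (simp add: map_poly_map_poly o_def of_int_of_int_mod_ring)

lemma reduce2_eq_0_iff: "reduce2 p = 0 \<longleftrightarrow> (\<forall>i. even (coeff p i))"
  by (auto simp: poly_eq_iff coeff_map_poly of_int_gf2 split: if_splits)

lemma gf2_rootless_degree:
  fixes p :: "gf2 poly"
  assumes "\<forall>t. poly p t \<noteq> 0" "\<not> is_unit p"
  shows "2 \<le> degree p"
proof (rule ccontr)
  assume "\<not> 2 \<le> degree p"
  moreover have "p \<noteq> 0" using assms(1) by auto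
  moreover have "degree p \<noteq> 0" using assms \<open>p \<noteq> 0\<close> by (auto elim!: degree_eq_zeroE simp: is_unit_poly_iff)
  ultimately have "degree p = 1" by simp
  then have "poly p (- coeff p 0 / coeff p 1) = 0"
    using leading_coeff_neq_0[OF \<open>p \<noteq> 0\<close>] by (simp add: poly_altdef atMost_Suc)
  with assms(1) show False by blast
qed

lemma gf2_rootless_quadratic:
  fixes p :: "gf2 poly"
  assumes "degree p = 2" "\<forall>t. poly p t \<noteq> 0"
  shows "p = [:1, 1, 1:]"
proof -
  have ev: "poly p t = coeff p 0 + coeff p 1 * t + coeff p 2 * t\<^sup>2" for t
    using assms(1) by (simp add: poly_altdef atMost_Suc numeral_2_eq_2)
  have "p \<noteq> 0" using assms(2) by auto
  then have "coeff p 2 \<noteq> 0" using assms(1) leading_coeff_neq_0[of p] by simp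
  then have c2: "coeff p 2 = 1" using gf2_cases by blast
  have "coeff p 0 \<noteq> 0" using assms(2) ev[of 0] by auto
  then have c0: "coeff p 0 = 1" using gf2_cases by blast
  have "coeff p 1 \<noteq> 0"
  proof
    assume "coeff p 1 = 0"
    then have "poly p 1 = 0" using ev[of 1] c0 c2 gf2_two by simp
    with assms(2) show False by blast
  qed
  then have "coeff p 1 = 1" using gf2_cases by blast
  show ?thesis
  proof (rule poly_eqI)
    fix n
    show "coeff p n = coeff [:1, 1, 1:] n"
    proof (cases "n \<le> 2")
      case True
      then have "n = 0 \<or> n = 1 \<or> n = 2" by auto
      then show ?thesis using c0 c2 \<open>coeff p 1 = 1\<close> by (auto simp: numeral_2_eq_2)
    next
      case False
      then show ?thesis using assms(1) by (auto simp: coeff_eq_0 coeff_pCons split: nat.splits)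
    qed
  qed
qed

lemma gf2_rootless_prime_power:
  fixes h :: "gf2 poly"
  assumes "h \<noteq> 0" "degree h \<le> 4" "\<forall>t. poly h t \<noteq> 0" "\<not> is_unit h"
  obtains \<pi> m where "prime \<pi>" "h = \<pi> ^ m"
proof -
  obtain \<pi> where \<pi>: "prime \<pi>" "\<pi> dvd h" using prime_divisorE[OF assms(1,4)] by blast
  then obtain k where hk: "h = \<pi> * k" by (auto elim: dvdE)
  have rootless: "\<forall>t. poly q t \<noteq> 0" if "q dvd h" for q
    using that assms(3) by (auto elim!: dvdE)
  have "2 \<le> degree \<pi>"
    using gf2_rootless_degree rootless[OF \<pi>(2)] not_prime_unit \<pi>(1) by blast
  have "k dvd h" using hk by simp
  show thesis
  proof (cases "is_unit k")
    case True
    moreover have "k \<noteq> 0" using hk assms(1) by auto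
    ultimately have "degree k = 0" using is_unit_iff_degree by blast
    then obtain c where "k = [:c:]" by (rule degree_eq_zeroE)
    then have "c = 1" using gf2_cases[of c] \<open>k \<noteq> 0\<close> by auto
    with \<open>k = [:c:]\<close> have "k = 1" by (simp add: pCons_one)
    then show thesis using that[of \<pi> 1] \<pi> hk by simp
  next
    case False
    have "2 \<le> degree k" using gf2_rootless_degree rootless[OF \<open>k dvd h\<close>] False by blast
    moreover have "degree h = degree \<pi> + degree k"
      using hk assms(1) by (simp add: degree_mult_eq)
    ultimately have "degree \<pi> = 2" "degree k = 2" using \<open>2 \<le> degree \<pi>\<close> assms(2) by auto
    then have "\<pi> = [:1, 1, 1:]" "k = [:1, 1, 1:]"
      using gf2_rootless_quadratic rootless[OF \<pi>(2)] rootless[OF \<open>k dvd h\<close>] by blast+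
    then show thesis using that[of \<pi> 2] \<pi> hk by (simp add: power2_eq_square)
  qed
qed

lemma prime_power_dvd_idempotent:
  fixes p e :: "'a :: factorial_ring_gcd"
  assumes "prime p" "p ^ m dvd e * (e - 1)"
  shows "p ^ m dvd e \<or> p ^ m dvd e - 1"
proof -
  have "\<not> (p dvd e \<and> p dvd e - 1)"
  proof
    assume "p dvd e \<and> p dvd e - 1"
    then have "p dvd e - (e - 1)" by (blast intro: dvd_diff)
    with \<open>prime p\<close> show False by (simp add: not_prime_unit)
  qed
  then consider "\<not> p dvd e - 1" | "\<not> p dvd e" by blast
  then show ?thesis
  proof cases
    case 1
    note coprime = prime_imp_power_coprime[OF \<open>prime p\<close> 1, THEN Rings.coprime_commute[THEN iffD1]]
    show ?thesis using assms(2) coprime_dvd_mult_left_iff[OF coprime] by simp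
  next
    case 2
    note coprime = prime_imp_power_coprime[OF \<open>prime p\<close> 2, THEN Rings.coprime_commute[THEN iffD1]]
    show ?thesis using assms(2) coprime_dvd_mult_right_iff[OF coprime] by simp
  qed
qed

section \<open>Reduction modulo 2 in \<open>\<int>[\<theta>]\<close>\<close>

lemma int_poly_ringI: "x = poly (map_poly of_int p) \<theta> \<Longrightarrow> x \<in> int_poly_ring \<theta>"
  unfolding int_poly_ring_def by blast

lemma int_poly_ring_of_int: "of_int k \<in> int_poly_ring \<theta>"
  by (rule int_poly_ringI[of _ "[:k:]"]) (simp add: of_int_hom.map_poly_pCons_hom)

lemma int_poly_ring_add:
  assumes "x \<in> int_poly_ring \<theta>" "y \<in> int_poly_ring \<theta>"
  shows "x + y \<in> int_poly_ring \<theta>"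
proof -
  from assms obtain p q where "x = poly (map_poly of_int p) \<theta>" "y = poly (map_poly of_int q) \<theta>"
    unfolding int_poly_ring_def by blast
  then show ?thesis by (intro int_poly_ringI[of _ "p + q"]) (simp add: hom_distribs)
qed

lemma int_poly_ring_mult:
  assumes "x \<in> int_poly_ring \<theta>" "y \<in> int_poly_ring \<theta>"
  shows "x * y \<in> int_poly_ring \<theta>"
proof -
  from assms obtain p q where "x = poly (map_poly of_int p) \<theta>" "y = poly (map_poly of_int q) \<theta>"
    unfolding int_poly_ring_def by blast
  then show ?thesis by (intro int_poly_ringI[of _ "p * q"]) (simp add: hom_distribs)
qed

lemma int_poly_ring_numeral: "numeral k \<in> int_poly_ring \<theta>"
  using int_poly_ring_of_int[of "numeral k"] by simp

lemmas int_poly_ring_intros = int_poly_ring_add int_poly_ring_mult int_poly_ring_numeral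

definition even_at :: "complex \<Rightarrow> int poly \<Rightarrow> bool" where
  "even_at \<theta> p \<longleftrightarrow> poly (map_poly of_int p) \<theta> \<in> (*) 2 ` int_poly_ring \<theta>"

lemma even_at_iff: "even_at \<theta> p \<longleftrightarrow> (\<exists>q. poly (map_poly of_int p) \<theta> = 2 * poly (map_poly of_int q) \<theta>)"
  unfolding even_at_def int_poly_ring_def by blast

lemma even_at_if_root: "poly (map_poly of_int p) \<theta> = 0 \<Longrightarrow> even_at \<theta> p"
  unfolding even_at_iff by (intro exI[of _ 0]) simp

lemma even_at_diff:
  assumes "even_at \<theta> p" "even_at \<theta> p'"
  shows "even_at \<theta> (p - p')"
proof -
  from assms obtain q q' where "poly (map_poly of_int p) \<theta> = 2 * poly (map_poly of_int q) \<theta>"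
    "poly (map_poly of_int p') \<theta> = 2 * poly (map_poly of_int q') \<theta>"
    unfolding even_at_iff by blast
  then have "poly (map_poly of_int (p - p')) \<theta> = 2 * poly (map_poly of_int (q - q')) \<theta>"
    by (simp add: hom_distribs algebra_simps)
  then show ?thesis unfolding even_at_iff by blast
qed

lemma even_at_mult:
  assumes "even_at \<theta> p"
  shows "even_at \<theta> (p * k)"
proof -
  from assms obtain q where "poly (map_poly of_int p) \<theta> = 2 * poly (map_poly of_int q) \<theta>"
    unfolding even_at_iff by blast
  then have "poly (map_poly of_int (p * k)) \<theta> = 2 * poly (map_poly of_int (q * k)) \<theta>"
    by (simp add: hom_distribs)
  then show ?thesis unfolding even_at_iff by blast
qed

lemma even_at_if_reduce2_eq:
  assumes "even_at \<theta> p'" "reduce2 p = reduce2 p'"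
  shows "even_at \<theta> p"
proof -
  define w where "w = map_poly (\<lambda>c. c div 2) (p - p')"
  have "reduce2 (p - p') = 0" using assms(2) by (simp add: hom_distribs)
  then have "even (coeff (p - p') i)" for i by (simp add: reduce2_eq_0_iff)
  then have "p = p' + Polynomial.smult 2 w"
    unfolding w_def by (intro poly_eqI) (simp add: coeff_map_poly algebra_simps)
  moreover from assms(1) obtain q where "poly (map_poly of_int p') \<theta> = 2 * poly (map_poly of_int q) \<theta>"
    unfolding even_at_iff by blast
  ultimately have "poly (map_poly of_int p) \<theta> = 2 * poly (map_poly of_int (q + w)) \<theta>"
    by (simp add: hom_distribs algebra_simps)
  then show ?thesis unfolding even_at_iff by blast
qed

lemma poly_ideal_generator:
  fixes I :: "'a :: field poly set"
  assumes "u0 \<in> I" "u0 \<noteq> 0"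
    and diff: "\<And>u v. u \<in> I \<Longrightarrow> v \<in> I \<Longrightarrow> u - v \<in> I"
    and mult: "\<And>u k. u \<in> I \<Longrightarrow> u * k \<in> I"
  obtains h where "h \<in> I" "h \<noteq> 0" "degree h \<le> degree u0" "\<And>u. u \<in> I \<Longrightarrow> h dvd u"
proof -
  obtain h where h: "h \<in> I" "h \<noteq> 0" and min: "\<And>u. u \<in> I \<Longrightarrow> u \<noteq> 0 \<Longrightarrow> degree h \<le> degree u"
    using ex_has_least_nat[of "\<lambda>u. u \<in> I \<and> u \<noteq> 0" u0 degree] assms(1,2) by blast
  have "h dvd u" if "u \<in> I" for u
  proof (rule ccontr)
    assume "\<not> h dvd u"
    then have "u mod h \<noteq> 0" by (simp add: mod_eq_0_iff_dvd)
    moreover have "u mod h \<in> I"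
      using diff[OF that mult[OF h(1), of "u div h"]] by (simp add: minus_mult_div_eq_mod)
    ultimately have "degree h \<le> degree (u mod h)" by (rule min[rotated])
    with degree_mod_less'[OF h(2) \<open>u mod h \<noteq> 0\<close>] show False by simp
  qed
  with h min[OF assms(1,2)] show thesis by (rule that)
qed

text \<open>The polynomials that are even at \<open>\<theta>\<close> reduce to an ideal of \<open>GF(2)[X]\<close>, so
  \<open>\<int>[\<theta>]/2\<int>[\<theta>] \<cong> GF(2)[X]/(h)\<close> for a generator \<open>h\<close>; a primitive relation of \<open>\<theta>\<close> bounds its
  degree.\<close>

lemma even_at_principal:
  fixes \<theta> :: complex and r :: "int poly"
  assumes "content r = 1" "poly (map_poly of_int r) \<theta> = 0"
  obtains h where "h \<noteq> 0" "degree h \<le> degree r" "\<And>p. even_at \<theta> p \<longleftrightarrow> h dvd reduce2 p"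
proof -
  define I where "I = {reduce2 p | p. even_at \<theta> p}"
  have I_diff: "u - v \<in> I" if "u \<in> I" "v \<in> I" for u v
  proof -
    from that obtain p p' where "u = reduce2 p" "v = reduce2 p'" "even_at \<theta> p" "even_at \<theta> p'"
      unfolding I_def by blast
    then have "u - v = reduce2 (p - p')" "even_at \<theta> (p - p')"
      by (simp_all add: hom_distribs even_at_diff)
    then show ?thesis unfolding I_def by blast
  qed
  have I_mult: "u * k \<in> I" if "u \<in> I" for u k
  proof -
    from that obtain p where "u = reduce2 p" "even_at \<theta> p" unfolding I_def by blast
    then have "u * k = reduce2 (p * map_poly to_int_mod_ring k)"
      "even_at \<theta> (p * map_poly to_int_mod_ring k)"
      by (simp_all add: hom_distribs reduce2_surj even_at_mult)
    then show ?thesis unfolding I_def by blast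
  qed
  have rI: "reduce2 r \<in> I" unfolding I_def using even_at_if_root[OF assms(2)] by blast
  have r0: "reduce2 r \<noteq> 0"
  proof
    assume "reduce2 r = 0"
    then have "2 dvd coeff r i" for i by (simp add: reduce2_eq_0_iff)
    then have "2 dvd content r" by (simp flip: const_poly_dvd_iff_dvd_content add: const_poly_dvd_iff)
    with assms(1) show False by simp
  qed
  obtain h where h: "h \<in> I" "h \<noteq> 0" "degree h \<le> degree (reduce2 r)"
    and dvd: "\<And>u. u \<in> I \<Longrightarrow> h dvd u"
    using poly_ideal_generator[OF rI r0 I_diff I_mult] by blast
  have "even_at \<theta> p" if "h dvd reduce2 p" for p
  proof -
    from that obtain k where "reduce2 p = h * k" by blast
    then have "reduce2 p \<in> I" using I_mult[OF h(1)] by simp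
    then show "even_at \<theta> p" unfolding I_def by (auto intro: even_at_if_reduce2_eq)
  qed
  moreover have "degree h \<le> degree r"
    using h(3) degree_map_poly_le[of "of_int :: int \<Rightarrow> gf2" r] by linarith
  ultimately show thesis using that[of h] h(2) dvd unfolding I_def by blast
qed

text \<open>A root of \<open>h\<close> would give a ring map \<open>\<int>[\<theta>] \<rightarrow> GF(2)\<close> sending \<open>x\<close> to 1 and \<open>y\<close> to a root of
  \<open>Y\<^sup>2 + Y + 1\<close>.\<close>

lemma even_at_generator_rootless:
  fixes \<theta> x y :: complex and h :: "gf2 poly" and P Q :: "int poly"
  assumes h: "\<And>p. even_at \<theta> p \<longleftrightarrow> h dvd reduce2 p"
    and x: "x \<in> int_poly_ring \<theta>" "poly (map_poly of_int P) x = 0"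
      "\<And>t. poly (reduce2 P) t = 0 \<Longrightarrow> t = 1"
    and y: "y \<in> int_poly_ring \<theta>" "y\<^sup>2 = y + poly (map_poly of_int Q) x" "odd (poly Q 1)"
  shows "\<forall>t. poly h t \<noteq> 0"
proof (intro allI notI)
  fix t assume "poly h t = 0"
  then have vanish: "poly (reduce2 p) t = 0" if "poly (map_poly of_int p) \<theta> = 0" for p
    using h[of p] even_at_if_root[OF that] by (auto elim!: dvdE)
  obtain sx sy where s: "x = poly (map_poly of_int sx) \<theta>" "y = poly (map_poly of_int sy) \<theta>"
    using x(1) y(1) unfolding int_poly_ring_def by blast
  define u v where "u = poly (reduce2 sx) t" and "v = poly (reduce2 sy) t"
  have "poly (reduce2 P) u = 0"
    using vanish[of "pcompose P sx"] x(2) s(1)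
    by (simp add: u_def of_int_hom.map_poly_pcompose poly_pcompose)
  then have "u = 1" by (rule x(3))
  have "poly (map_poly of_int (sy\<^sup>2 - sy - pcompose Q sx)) \<theta> = 0"
    using y(2) s by (simp add: hom_distribs of_int_hom.map_poly_pcompose poly_pcompose)
  then have "poly (reduce2 (sy\<^sup>2 - sy - pcompose Q sx)) t = 0" by (rule vanish)
  then have "v\<^sup>2 - v - poly (reduce2 Q) 1 = 0"
    using \<open>u = 1\<close> by (simp add: u_def v_def hom_distribs of_int_hom.map_poly_pcompose poly_pcompose)
  moreover have "poly (reduce2 Q) 1 = 1"
    using of_int_hom.poly_map_poly[of Q 1] y(3) by (simp add: of_int_gf2)
  ultimately show False using gf2_cases[of v] gf2_two by (auto simp: power2_eq_square)
qed

text \<open>The generator is then a prime power, so \<open>\<int>[\<theta>]/2\<int>[\<theta>]\<close> is local.\<close>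

lemma idempotent_mod_2_trivial:
  fixes \<theta> x y e :: complex and r P Q :: "int poly"
  assumes r: "content r = 1" "degree r \<le> 4" "poly (map_poly of_int r) \<theta> = 0"
    and x: "x \<in> int_poly_ring \<theta>" "poly (map_poly of_int P) x = 0"
      "\<And>t. poly (reduce2 P) t = 0 \<Longrightarrow> t = 1"
    and y: "y \<in> int_poly_ring \<theta>" "y\<^sup>2 = y + poly (map_poly of_int Q) x" "odd (poly Q 1)"
    and e: "e \<in> int_poly_ring \<theta>" "e\<^sup>2 - e \<in> (*) 2 ` int_poly_ring \<theta>"
  shows "e \<in> (*) 2 ` int_poly_ring \<theta> \<or> e - 1 \<in> (*) 2 ` int_poly_ring \<theta>"
proof -
  obtain h where h: "h \<noteq> 0" "degree h \<le> 4" "\<And>p. even_at \<theta> p \<longleftrightarrow> h dvd reduce2 p"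
    using even_at_principal[OF r(1,3)] r(2) by (metis order.trans)
  have rootless: "\<forall>t. poly h t \<noteq> 0"
    by (rule even_at_generator_rootless[OF h(3) x y])
  obtain se where se: "e = poly (map_poly of_int se) \<theta>"
    using e(1) unfolding int_poly_ring_def by blast
  have "even_at \<theta> (se\<^sup>2 - se)" using e(2) se by (simp add: even_at_def hom_distribs)
  then have hE: "h dvd reduce2 se * (reduce2 se - 1)"
    using h(3) by (simp add: hom_distribs power2_eq_square algebra_simps)
  have "h dvd reduce2 se \<or> h dvd reduce2 se - 1"
  proof (cases "is_unit h")
    case False
    obtain \<pi> m where "prime \<pi>" "h = \<pi> ^ m"
      by (rule gf2_rootless_prime_power[OF h(1,2) rootless False])
    then show ?thesis using prime_power_dvd_idempotent[of \<pi> m] hE by simp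
  qed (simp add: unit_imp_dvd)
  then show ?thesis
    using h(3)[of se] h(3)[of "se - 1"] se by (auto simp: even_at_def hom_distribs)
qed

section \<open>Elements of \<open>\<rat>(\<alpha>)\<close>\<close>

lemma poly_sum_lessThan:
  fixes r :: "'a :: comm_ring_1 poly"
  assumes "degree r < n"
  shows "poly r x = (\<Sum>k<n. coeff r k * x ^ k)"
proof -
  have "poly r x = (\<Sum>k\<le>degree r. coeff r k * x ^ k)" by (simp add: poly_altdef)
  also have "\<dots> = (\<Sum>k<n. coeff r k * x ^ k)"
    using assms by (intro sum.mono_neutral_left) (auto simp: coeff_eq_0)
  finally show ?thesis .
qed

lemma poly_mod_at_root:
  fixes f p :: "rat poly" and \<alpha> :: "'a :: field_char_0"
  assumes "poly (map_poly of_rat f) \<alpha> = 0"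
  shows "poly (map_poly of_rat (p mod f)) \<alpha> = poly (map_poly of_rat p) \<alpha>"
proof -
  have "poly (map_poly of_rat p) \<alpha> = poly (map_poly of_rat (p div f * f + p mod f)) \<alpha>" by simp
  also have "\<dots> = poly (map_poly of_rat (p mod f)) \<alpha>"
    using assms by (simp only: of_rat_poly_hom.hom_add of_rat_poly_hom.hom_mult poly_add poly_mult) simp
  finally show ?thesis by simp
qed

text \<open>\<open>\<theta> = q(\<alpha>)\<close> is an eigenvalue of the matrix of multiplication by \<open>q\<close> on \<open>\<rat>[X]/(f)\<close>
  with respect to the basis \<open>1, X, \<dots>, X\<^sup>n\<^sup>-\<^sup>1\<close>.\<close>

lemma simple_ext_Q_element_char_poly:
  fixes f :: "rat poly" and \<alpha> \<theta> :: complex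
  assumes deg: "0 < degree f" and root: "poly (map_poly of_rat f) \<alpha> = 0"
    and "\<theta> \<in> simple_ext_Q \<alpha>"
  obtains \<chi> :: "rat poly" where "\<chi> \<noteq> 0" "degree \<chi> = degree f" "poly (map_poly of_rat \<chi>) \<theta> = 0"
proof -
  obtain q where th: "\<theta> = poly (map_poly of_rat q) \<alpha>"
    using assms(3) unfolding simple_ext_Q_def by blast
  define n where "n = degree f"
  have "f \<noteq> 0" using deg by auto
  define M :: "rat mat" where "M = mat n n (\<lambda>(j, k). coeff ((q * monom 1 j) mod f) k)"
  have M: "M \<in> carrier_mat n n" by (simp add: M_def)
  define B :: "complex mat" where "B = of_rat_hom.mat_hom M"
  have B: "B \<in> carrier_mat n n" using M by (simp add: B_def)
  define v where "v = vec n (\<lambda>k. \<alpha> ^ k)"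
  have "B *\<^sub>v v = \<theta> \<cdot>\<^sub>v v"
  proof (rule eq_vecI)
    fix j assume "j < dim_vec (\<theta> \<cdot>\<^sub>v v)"
    then have j: "j < n" by (simp add: v_def)
    have "(B *\<^sub>v v) $ j = (\<Sum>k<n. coeff (map_poly of_rat ((q * monom 1 j) mod f)) k * \<alpha> ^ k)"
      using j by (simp add: B_def M_def v_def mult_mat_vec_def scalar_prod_def atLeast0LessThan)
    also have "\<dots> = poly (map_poly of_rat ((q * monom 1 j) mod f)) \<alpha>"
      using degree_mod_less[OF \<open>f \<noteq> 0\<close>, of "q * monom 1 j"] deg
      by (intro poly_sum_lessThan[symmetric]) (auto simp: n_def)
    also have "\<dots> = \<theta> * \<alpha> ^ j" by (simp only: poly_mod_at_root[OF root]) (simp add: th hom_distribs poly_monom)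
    also have "\<dots> = (\<theta> \<cdot>\<^sub>v v) $ j" using j by (simp add: v_def)
    finally show "(B *\<^sub>v v) $ j = (\<theta> \<cdot>\<^sub>v v) $ j" .
  qed (simp add: B_def M_def v_def)
  moreover have "v \<in> carrier_vec n" "v \<noteq> 0\<^sub>v n"
    using deg by (auto simp: v_def n_def vec_eq_iff intro!: exI[of _ 0])
  ultimately have "eigenvalue B \<theta>"
    unfolding eigenvalue_def eigenvector_def using B by auto
  then have "poly (char_poly B) \<theta> = 0" using eigenvalue_root_char_poly[OF B] by simp
  also have "char_poly B = map_poly of_rat (char_poly M)"
    unfolding B_def by (rule of_rat_hom.char_poly_hom[OF M])
  finally have "poly (map_poly of_rat (char_poly M)) \<theta> = 0" .
  moreover have "char_poly M \<noteq> 0" "degree (char_poly M) = degree f"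
    using degree_monic_char_poly[OF M] by (auto simp: n_def)
  ultimately show thesis using that by blast
qed

lemma simple_ext_Q_element_primitive_root:
  fixes f :: "rat poly" and \<alpha> \<theta> :: complex
  assumes "0 < degree f" "poly (map_poly of_rat f) \<alpha> = 0" "\<theta> \<in> simple_ext_Q \<alpha>"
  obtains r :: "int poly" where "content r = 1" "degree r = degree f" "poly (map_poly of_int r) \<theta> = 0"
proof -
  obtain \<chi> where \<chi>: "\<chi> \<noteq> 0" "degree \<chi> = degree f" "poly (map_poly of_rat \<chi>) \<theta> = 0"
    using simple_ext_Q_element_char_poly[OF assms] by blast
  obtain d r where dr: "rat_to_normalized_int_poly \<chi> = (d, r)" by fastforce
  note r = rat_to_normalized_int_poly[OF dr]
  have "poly (map_poly of_rat \<chi>) \<theta> = of_rat d * poly (map_poly of_int r) \<theta>"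
    by (subst r(1)) (simp add: hom_distribs map_poly_map_poly o_def)
  then show thesis using that r \<chi> by simp
qed

lemma monogenic_simple_ext_QE:
  fixes f :: "rat poly" and \<alpha> :: complex
  assumes "monogenic (simple_ext_Q \<alpha>)" "0 < degree f" "poly (map_poly of_rat f) \<alpha> = 0"
  obtains \<theta> r where "int_poly_ring \<theta> = {z \<in> simple_ext_Q \<alpha>. algebraic_int z}"
    "content r = 1" "degree r = degree f" "poly (map_poly of_int r) \<theta> = 0"
proof -
  from assms(1) obtain \<theta> where \<theta>: "\<theta> \<in> ring_of_integers (simple_ext_Q \<alpha>)"
    and OK: "ring_of_integers (simple_ext_Q \<alpha>) = int_poly_ring \<theta>"
    unfolding monogenic_def by blast
  from \<theta> have "\<theta> \<in> simple_ext_Q \<alpha>" by (simp add: ring_of_integers_def)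
  then obtain r where "content r = 1" "degree r = degree f" "poly (map_poly of_int r) \<theta> = 0"
    using simple_ext_Q_element_primitive_root[OF assms(2,3)] by blast
  with OK show thesis by (intro that[of \<theta> r]) (simp_all add: ring_of_integers_def)
qed

section \<open>The quartics\<close>

text \<open>These are exactly the quartics \<open>X\<^sup>4 + aX\<^sup>3 + bX + c\<close> with \<open>a\<close> odd, \<open>b \<equiv> a + 2 (mod 4)\<close>
  and \<open>c \<equiv> a + b + 3 (mod 8)\<close>.\<close>

definition quartic :: "int \<Rightarrow> int \<Rightarrow> int \<Rightarrow> int poly" where
  "quartic A B C = [:7 + 4 * A + 4 * B + 8 * C, 3 + 2 * A + 4 * B, 0, 1 + 2 * A, 1:]"

text \<open>With \<open>\<gamma> = (x\<^sup>3 + 4x\<^sup>2 + 6x + 3)/2\<close> one has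
  \<open>(2\<gamma>)\<^sup>2 - 2(2\<gamma>) = (x\<^sup>2 + (7 - 2A)x + 21 - 12A + 4A\<^sup>2) \<cdot> quartic A B C (x) + 4 \<cdot> gamma_poly A B C (x)\<close>.\<close>

definition gamma_poly :: "int \<Rightarrow> int \<Rightarrow> int \<Rightarrow> int poly" where
  "gamma_poly A B C =
    [:-36 - 42*C - 21*B + 24*A*C + 12*A*B + 5*A^2 - 8*A^2*C - 4*A^2*B - 4*A^3,
      -22 - 14*C - 28*B - 5*A + 4*A*C + 14*A*B + 5*A^2 - 4*A^2*B - 2*A^3,
      6 - 2*C - 8*B - 3*A + 2*A*B + A^2,
      7 - B - 8*A + 5*A^2 - 2*A^3:]"

lemma poly_quartic:
  fixes x :: "'a :: comm_ring_1"
  shows "poly (map_poly of_int (quartic A B C)) x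
    = x ^ 4 + of_int (1 + 2 * A) * x ^ 3 + of_int (3 + 2 * A + 4 * B) * x + of_int (7 + 4 * A + 4 * B + 8 * C)"
  by (simp add: quartic_def of_int_hom.map_poly_pCons_hom of_int_poly_hom.hom_one algebra_simps
      power_numeral_reduce)

lemma lead_coeff_quartic: "lead_coeff (quartic A B C) = 1"
  and degree_quartic: "degree (quartic A B C) = 4"
  by (simp_all add: quartic_def)

lemma odd_gamma_poly_at_1: "odd (poly (gamma_poly A B C) 1)"
proof -
  have "poly (gamma_poly A B C) 1 = 2 * (-29*C - 29*B + 14*A*C + 14*A*B + 8*A^2 - 4*A^2*C
      - 4*A^2*B - 4*A^3 - 8*A) - 45"
    by (simp add: gamma_poly_def algebra_simps)
  then show ?thesis by simp
qed

lemma quartic_gamma_square: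
  fixes x :: complex
  assumes "poly (map_poly of_int (quartic A B C)) x = 0"
  defines "\<gamma> \<equiv> (x ^ 3 + 4 * x\<^sup>2 + 6 * x + 3) / 2"
  shows "\<gamma>\<^sup>2 = \<gamma> + poly (map_poly of_int (gamma_poly A B C)) x"
proof -
  define K where "K = x\<^sup>2 + (7 - 2 * of_int A) * x + (21 - 12 * of_int A + 4 * of_int A ^ 2)"
  have "4 * (\<gamma>\<^sup>2 - (\<gamma> + poly (map_poly of_int (gamma_poly A B C)) x))
      = K * poly (map_poly of_int (quartic A B C)) x"
    unfolding K_def \<gamma>_def poly_quartic
    by (simp add: gamma_poly_def of_int_hom.map_poly_pCons_hom algebra_simps power2_eq_square
        power3_eq_cube power4_eq_xxxx)
  with assms(1) have "4 * (\<gamma>\<^sup>2 - (\<gamma> + poly (map_poly of_int (gamma_poly A B C)) x)) = 0"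
    by (simp only: mult_zero_right)
  then show ?thesis by (simp only: mult_eq_0_iff right_minus_eq) simp
qed

lemma quartic_root_algebraic_int:
  fixes x :: complex
  assumes "poly (map_poly of_int (quartic A B C)) x = 0"
  shows "algebraic_int x" "algebraic_int ((x ^ 3 + 4 * x\<^sup>2 + 6 * x + 3) / 2)"
proof -
  let ?\<gamma> = "(x ^ 3 + 4 * x\<^sup>2 + 6 * x + 3) / 2"
  have \<gamma>: "?\<gamma> ^ 2 = (\<Sum>j<2. poly (map_poly of_int (if j = 0 then gamma_poly A B C else 1)) x * ?\<gamma> ^ j)"
    using quartic_gamma_square[OF assms] by (simp add: numeral_2_eq_2 add.commute)
  obtain n g where "0 < n" "g 0 = 1" "mult_stable n g x" "mult_stable n g ?\<gamma>"
    by (rule mult_stable_tower[OF assms lead_coeff_quartic \<gamma>]) simp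
  then show "algebraic_int x" "algebraic_int ?\<gamma>"
    by (auto intro: algebraic_int_if_mult_stable[of 0 n g])
qed

lemma quartic_at_quadratic_root:
  fixes r a b c :: complex
  assumes "r\<^sup>2 + 3 * r + 3 = 0"
  shows "r ^ 4 + a * r ^ 3 + b * r + c = (c + 9 * a - 18) + (b + 6 * a - 9) * r"
proof -
  have "r ^ 4 + a * r ^ 3 + b * r + c
      = (r\<^sup>2 + 3 * r + 3) * (r\<^sup>2 + (a - 3) * r + (6 - 3 * a)) + ((c + 9 * a - 18) + (b + 6 * a - 9) * r)"
    by (simp add: algebra_simps power2_eq_square power3_eq_cube power4_eq_xxxx)
  with assms show ?thesis by simp
qed

lemma quartic_halves_not_algebraic_int:
  fixes x :: complex
  assumes irr: "irreducible (map_poly (of_int :: int \<Rightarrow> rat) (quartic A B C))"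
    and root: "poly (map_poly of_int (quartic A B C)) x = 0"
  shows "\<not> algebraic_int ((x\<^sup>2 + 3 * x + 3) / 2)" "\<not> algebraic_int ((x\<^sup>2 + 3 * x + 2) / 2)"
proof -
  let ?P = "poly (map_poly of_int (quartic A B C)) :: complex \<Rightarrow> complex"
  obtain r1 r2 :: complex where r: "r1 + r2 = - of_rat 3" "r1 * r2 = of_rat 3"
    using exists_quadratic_roots[of 3 3] by auto
  define u v where "u = -1 + 11*A + 2*B + 4*C" and "v = 7*A + 2*B"
  have P_at_r: "?P r = of_int (2 * u) + of_int (2 * v) * r" if "r = r1 \<or> r = r2" for r
  proof -
    have "(r - r1) * (r - r2) = r\<^sup>2 - (r1 + r2) * r + r1 * r2" by (simp add: algebra_simps power2_eq_square)
    then have "r\<^sup>2 + 3 * r + 3 = (r - r1) * (r - r2)" using r by simp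
    then have "r\<^sup>2 + 3 * r + 3 = 0" using that by auto
    from quartic_at_quadratic_root[of r "of_int (1 + 2 * A)" "of_int (3 + 2 * A + 4 * B)"
        "of_int (7 + 4 * A + 4 * B + 8 * C)", OF this]
    show ?thesis by (simp add: poly_quartic u_def v_def algebra_simps)
  qed
  have "?P r1 * ?P r2 = (of_int (2 * u))\<^sup>2 + of_int (2 * u) * of_int (2 * v) * (r1 + r2)
      + (of_int (2 * v))\<^sup>2 * (r1 * r2)"
    by (simp add: P_at_r algebra_simps power2_eq_square)
  also have "\<dots> = of_int (4 * (u\<^sup>2 - 3 * u * v + 3 * v\<^sup>2))"
    by (simp add: r algebra_simps power2_eq_square)
  finally have "\<not> algebraic_int ((x\<^sup>2 + of_rat 3 * x + of_rat 3) / 2)"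
    by (rule not_algebraic_int_half_quadratic[OF irr lead_coeff_quartic degree_quartic root r])
      (cases "even A", simp_all add: u_def v_def power2_eq_square)
  then show "\<not> algebraic_int ((x\<^sup>2 + 3 * x + 3) / 2)" by simp
  have norm: "?P (-1) * ?P (-2) = of_int (4 * ((1 + 2 * C) * (9 - 16 * A - 4 * B + 8 * C)))"
    by (simp add: poly_quartic algebra_simps)
  have "\<not> algebraic_int ((x\<^sup>2 + of_rat 3 * x + of_rat 2) / 2)"
    by (rule not_algebraic_int_half_quadratic[OF irr lead_coeff_quartic degree_quartic root _ _ norm]) simp_all
  then show "\<not> algebraic_int ((x\<^sup>2 + 3 * x + 2) / 2)" by simp
qed

lemma reduce2_quartic_root: "poly (reduce2 (quartic A B C)) t = 0 \<Longrightarrow> t = 1"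
proof -
  have "poly (reduce2 (quartic A B C)) 0 = of_int (7 + 4 * A + 4 * B + 8 * C)"
    using poly_quartic[of A B C "0 :: gf2"] by simp
  also have "\<dots> = 1" by (simp add: of_int_gf2)
  finally show "poly (reduce2 (quartic A B C)) t = 0 \<Longrightarrow> t = 1" using gf2_cases[of t] by auto
qed

lemma quartic_not_monogenic:
  fixes \<alpha> :: complex
  assumes irr: "irreducible (map_poly (of_int :: int \<Rightarrow> rat) (quartic A B C))"
    and root: "poly (map_poly of_int (quartic A B C)) \<alpha> = 0"
  shows "\<not> monogenic (simple_ext_Q \<alpha>)"
proof
  assume "monogenic (simple_ext_Q \<alpha>)"
  moreover have "0 < degree (map_poly (of_int :: int \<Rightarrow> rat) (quartic A B C))"
    by (simp add: degree_quartic)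
  moreover have "poly (map_poly of_rat (map_poly (of_int :: int \<Rightarrow> rat) (quartic A B C))) \<alpha> = 0"
    using root by (simp add: map_poly_map_poly o_def)
  ultimately obtain \<theta> r where OK: "int_poly_ring \<theta> = {z \<in> simple_ext_Q \<alpha>. algebraic_int z}"
    and r: "content r = 1" "degree r = 4" "poly (map_poly of_int r) \<theta> = 0"
    by (rule monogenic_simple_ext_QE) (simp add: degree_quartic)
  have in_OK: "z \<in> int_poly_ring \<theta>" if "z = poly (map_poly of_rat p) \<alpha>" "algebraic_int z" for z p
    using that unfolding OK simple_ext_Q_def by blast
  define \<gamma> where "\<gamma> = (\<alpha> ^ 3 + 4 * \<alpha>\<^sup>2 + 6 * \<alpha> + 3) / 2"
  define e where "e = \<alpha>\<^sup>2 + 3 * \<alpha> + 3"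
  have \<alpha>: "\<alpha> \<in> int_poly_ring \<theta>"
    by (rule in_OK[of _ "[:0, 1:]", OF _ quartic_root_algebraic_int(1)[OF root]])
      (simp add: of_rat_hom.map_poly_pCons_hom)
  have \<gamma>: "\<gamma> \<in> int_poly_ring \<theta>"
  proof (rule in_OK)
    show "\<gamma> = poly (map_poly of_rat [:3/2, 3, 2, 1/2:]) \<alpha>"
      by (simp add: \<gamma>_def field_simps power2_eq_square power3_eq_cube of_rat_divide
          of_rat_hom.map_poly_pCons_hom)
    show "algebraic_int \<gamma>" unfolding \<gamma>_def by (rule quartic_root_algebraic_int(2)[OF root])
  qed
  have e: "e \<in> int_poly_ring \<theta>"
    unfolding e_def power2_eq_square using \<alpha> by (intro int_poly_ring_intros)
  have "e\<^sup>2 - e = 2 * (\<gamma> * (\<alpha> + 2))"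
    unfolding e_def \<gamma>_def by (simp add: algebra_simps power2_eq_square power3_eq_cube)
  moreover have "\<gamma> * (\<alpha> + 2) \<in> int_poly_ring \<theta>" using \<alpha> \<gamma> by (intro int_poly_ring_intros)
  ultimately have "e\<^sup>2 - e \<in> (*) 2 ` int_poly_ring \<theta>" by simp
  then have "e \<in> (*) 2 ` int_poly_ring \<theta> \<or> e - 1 \<in> (*) 2 ` int_poly_ring \<theta>"
    using r(1) r(2)[THEN eq_refl] r(3) \<alpha> root reduce2_quartic_root \<gamma> quartic_gamma_square[OF root]
      odd_gamma_poly_at_1 e
    unfolding \<gamma>_def by (intro idempotent_mod_2_trivial)
  moreover have "z \<notin> (*) 2 ` int_poly_ring \<theta>" if "\<not> algebraic_int (z / 2)" for z
    using that unfolding OK by auto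
  moreover have "e - 1 = \<alpha>\<^sup>2 + 3 * \<alpha> + 2" by (simp add: e_def)
  ultimately show False using quartic_halves_not_algebraic_int[OF irr root] by (metis e_def)
qed

theorem corollary2p2:
  fixes a b c :: int and \<alpha> :: complex
  defines "F \<equiv> [:c, b, 0, a, 1:] :: int poly"
  assumes irr: "irreducible (map_poly (of_int :: int \<Rightarrow> rat) F)"
    and root: "poly (map_poly of_int F) \<alpha> = 0"
    and cases: "(a mod 8 = 1 \<and> b mod 8 = 3 \<and> c mod 8 = 7)
             \<or> (a mod 8 = 5 \<and> ((b mod 8 = 3 \<and> c mod 8 = 3)
                                   \<or> (b mod 8 = 7 \<and> c mod 8 = 7)))
             \<or> (a mod 8 = 7 \<and> c mod 8 = 7 \<and> b mod 8 = 5)"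
  shows "\<not> monogenic (simple_ext_Q \<alpha>)"
proof -
  have "odd a" "4 dvd b - a - 2" "8 dvd c - a - b - 3" using cases by presburger+
  then obtain A B C where "a = 1 + 2 * A" "b - a - 2 = 4 * B" "c - a - b - 3 = 8 * C"
    by (auto elim!: oddE dvdE)
  then have "F = quartic A B C" by (simp add: F_def quartic_def algebra_simps)
  then show ?thesis using quartic_not_monogenic irr root by simp
qed

end
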